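(* Let $L$ be an oriented, ordered virtual link diagram with components $L_1,\dots,L_n$ and affine bilabeling $C$. Let $C'$ be another affine bilabeling in which some or all components have a different starting point, with the same starting bilabels. For component $i$ write $A_i=a^{(i)}_1+a^{(i)}_2$ and let $n_i$ be its weight. Track the classical crossings passed in going along $L_i$ from its starting point in $C$ to its starting point in $C'$: - let $O_i$ be the set of passages where $L_i$ is the overstrand; - let $U_i$ be the set of passages where $L_i$ is the understrand; - let $I_i$ be the total index change of $L_i$ along this path. Write $p_{(L,C)}=\sum_d\operatorname{sgn}(d)\,t_{o(d)}^{W_C(d)}-\mathrm{writhe}(L)$. Then $p_{(L,C')}$ is obtained from $p_{(L,C)}$ by: - replacing $A_i$ with $A_i-I_i$ for every $i$; and - multiplying the monomial of the crossing involved by $t_i^{\,n_i}$ for each passage in $O_i$, and by $t_j^{-n_i}$ for each passage in $U_i$, where $j$ is the other component involved in that crossing (possibly $j=i$).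
   Context: **Diagrams.** A virtual link diagram is an oriented planar diagram of ordered closed curves $L_1,\dots,L_n$ (components) with classical and virtual crossings. **Crossing conventions.** Draw a classical crossing with both strands oriented upward. - The bottom-left-to-top-right strand has index change $-1$; the bottom-right-to-top-left strand has index change $+1$. - The crossing is positive ($\operatorname{sgn}=+1$) if the overstrand is the bottom-left-to-top-right strand, and negative otherwise. - Self-crossings have both strands on one component; external crossings have strands on different components. - The weight $n_i$ of $L_i$ is the sum of the index changes of $L_i$ over its passages through external classical crossings. **Affine bilabeling.** - Each component $L_k$ gets a starting point with bilabel $(a^{(k)}_1,a^{(k)}_2)$ of formal integer variables, distinct for different components. - The bilabel is carried along the component in its orientation and is unchanged at virtual crossings. - At a classical crossing with index change $\varepsilon$, the first entry changes by $\varepsilon$ at a self-crossing, and the second entry changes by $\varepsilon$ at an external crossing. - The discrepancy $n_k$ (in the second entry) on returning is placed at the starting point. **Weights and polynomial.** Let $|(x,y)|=x+y$. With both strands drawn upward: - if $c$ is positive, $W(c)=|\text{bottom-left}|-|\text{top-left}|$; - if $c$ is negative, $W(c)=|\text{bottom-right}|-|\text{top-right}|$. The multi-variable affine index polynomial is $p_{(L,C)}=\sum_c\operatorname{sgn}(c)(t_{o(c)}^{W(c)}-1)$ over classical crossings, where $o(c)$ is the component of the overstrand. *)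

theory Defs
  imports Main
begin

text \<open>Only classical crossings matter (virtual crossings do not change labels).
  Components are numbered 0..<n.  Component k is described by the cyclic
  sequence of its passages through classical crossings, read along the
  orientation from a fixed reference point: a passage is (d, b) with d a crossing
  and b = True iff the component is the overstrand there.\<close>

type_synonym 'c passage = "'c \<times> bool"

record 'c vdiag =
  ncomp :: nat
  gauss :: "nat \<Rightarrow> 'c passage list"
  crossings :: "'c set"
  csgn :: "'c \<Rightarrow> int"

definition wf_diag :: "'c vdiag \<Rightarrow> bool" where
  "wf_diag D \<longleftrightarrow> finite (crossings D)
     \<and> (\<forall>d\<in>crossings D. csgn D d = 1 \<or> csgn D d = -1)
     \<and> (\<forall>k<ncomp D. distinct (gauss D k) \<and> fst ` set (gauss D k) \<subseteq> crossings D)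
     \<and> (\<forall>d\<in>crossings D. \<forall>b. \<exists>!k. k < ncomp D \<and> (d, b) \<in> set (gauss D k))"

definition comp_of :: "'c vdiag \<Rightarrow> 'c passage \<Rightarrow> nat" where
  "comp_of D p = (THE k. k < ncomp D \<and> p \<in> set (gauss D k))"

definition over_comp :: "'c vdiag \<Rightarrow> 'c \<Rightarrow> nat" where
  "over_comp D d = comp_of D (d, True)"

definition under_comp :: "'c vdiag \<Rightarrow> 'c \<Rightarrow> nat" where
  "under_comp D d = comp_of D (d, False)"

definition self_crossing :: "'c vdiag \<Rightarrow> 'c \<Rightarrow> bool" where
  "self_crossing D d \<longleftrightarrow> over_comp D d = under_comp D d"

text \<open>With both strands upward, the overstrand of a
  positive crossing is bottom-left-to-top-right (index change -1), the overstrand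
  of a negative crossing is bottom-right-to-top-left (index change +1); hence
  the overstrand has index change -sgn and the understrand +sgn.\<close>
definition idx :: "'c vdiag \<Rightarrow> 'c passage \<Rightarrow> int" where
  "idx D p = (if snd p then - csgn D (fst p) else csgn D (fst p))"

definition weight :: "'c vdiag \<Rightarrow> nat \<Rightarrow> int" where
  "weight D k = (\<Sum>p\<leftarrow>gauss D k. if self_crossing D (fst p) then 0 else idx D p)"

definition writhe :: "'c vdiag \<Rightarrow> int" where
  "writhe D = (\<Sum>d\<in>crossings D. csgn D d)"

text \<open>A choice of starting points is s :: nat => nat: the starting point of component k
  lies just before passage number (s k mod length) of gauss D k.\<close>
definition rot :: "'c vdiag \<Rightarrow> (nat \<Rightarrow> nat) \<Rightarrow> nat \<Rightarrow> 'c passage list" where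
  "rot D s k = rotate (s k) (gauss D k)"

definition pos :: "'c vdiag \<Rightarrow> (nat \<Rightarrow> nat) \<Rightarrow> 'c passage \<Rightarrow> nat" where
  "pos D s p = (THE j. j < length (rot D s (comp_of D p)) \<and> rot D s (comp_of D p) ! j = p)"

text \<open>Formal affine expressions in the variables A_k = a_1^(k) + a_2^(k):
  a pair (c, c0) stands for  sum_k c k * A_k + c0.\<close>
type_synonym lin = "(nat \<Rightarrow> int) \<times> int"

definition lin_zero :: lin where "lin_zero = ((\<lambda>_. 0), 0)"
definition lin_add :: "lin \<Rightarrow> lin \<Rightarrow> lin" where
  "lin_add x y = ((\<lambda>k. fst x k + fst y k), snd x + snd y)"
definition lin_diff :: "lin \<Rightarrow> lin \<Rightarrow> lin" where
  "lin_diff x y = ((\<lambda>k. fst x k - fst y k), snd x - snd y)"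
definition lin_const :: "int \<Rightarrow> lin" where
  "lin_const c = ((\<lambda>_. 0), c)"
definition lin_var :: "nat \<Rightarrow> lin" where
  "lin_var k = ((\<lambda>m. if m = k then 1 else 0), 0)"

text \<open>Bilabel on component k after passing the first j passages from the starting point:
  (a_1^(k) + (index changes at self-crossings), a_2^(k) + (index changes at external
  crossings)).  We record the two integer offsets; |(x,y)| = x + y is then
  A_k + both offsets.\<close>
definition label_offsets :: "'c vdiag \<Rightarrow> (nat \<Rightarrow> nat) \<Rightarrow> nat \<Rightarrow> nat \<Rightarrow> int \<times> int" where
  "label_offsets D s k j =
     ((\<Sum>p\<leftarrow>take j (rot D s k). if self_crossing D (fst p) then idx D p else 0),
      (\<Sum>p\<leftarrow>take j (rot D s k). if self_crossing D (fst p) then 0 else idx D p))"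

definition label_norm :: "'c vdiag \<Rightarrow> (nat \<Rightarrow> nat) \<Rightarrow> nat \<Rightarrow> nat \<Rightarrow> lin" where
  "label_norm D s k j = lin_add (lin_var k)
      (lin_const (fst (label_offsets D s k j) + snd (label_offsets D s k j)))"

text \<open>W(c): for both signs this is |incoming overstrand arc| - |outgoing understrand arc|
  (bottom-left/top-left for positive, bottom-right/top-right for negative).\<close>
definition Wt :: "'c vdiag \<Rightarrow> (nat \<Rightarrow> nat) \<Rightarrow> 'c \<Rightarrow> lin" where
  "Wt D s d = lin_diff
      (label_norm D s (over_comp D d) (pos D s (d, True)))
      (label_norm D s (under_comp D d) (Suc (pos D s (d, False))))"

text \<open>A monomial assigns to each t_i an exponent; a polynomial is an integer
  coefficient function on monomials (finitely supported).\<close>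
type_synonym mono = "nat \<Rightarrow> lin"
type_synonym vpoly = "mono \<Rightarrow> int"

definition mono_t :: "nat \<Rightarrow> lin \<Rightarrow> mono" where
  "mono_t i e = (\<lambda>j. if j = i then e else lin_zero)"

definition mono_one :: mono where "mono_one = (\<lambda>_. lin_zero)"

definition poly_of :: "'c vdiag \<Rightarrow> ('c \<Rightarrow> lin) \<Rightarrow> vpoly" where
  "poly_of D E = (\<lambda>m. (\<Sum>d\<in>crossings D. if mono_t (over_comp D d) (E d) = m then csgn D d else 0)
                      - (if m = mono_one then writhe D else 0))"

definition aip :: "'c vdiag \<Rightarrow> (nat \<Rightarrow> nat) \<Rightarrow> vpoly" where
  "aip D s = poly_of D (Wt D s)"

text \<open>Passages of L_k met going from its starting point in s to its starting point in s'.\<close>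
definition path :: "'c vdiag \<Rightarrow> (nat \<Rightarrow> nat) \<Rightarrow> (nat \<Rightarrow> nat) \<Rightarrow> nat \<Rightarrow> 'c passage list" where
  "path D s s' k = take (nat ((int (s' k) - int (s k)) mod int (length (gauss D k)))) (rot D s k)"

definition in_path :: "'c vdiag \<Rightarrow> (nat \<Rightarrow> nat) \<Rightarrow> (nat \<Rightarrow> nat) \<Rightarrow> 'c passage \<Rightarrow> bool" where
  "in_path D s s' p \<longleftrightarrow> p \<in> set (path D s s' (comp_of D p))"

definition Ich :: "'c vdiag \<Rightarrow> (nat \<Rightarrow> nat) \<Rightarrow> (nat \<Rightarrow> nat) \<Rightarrow> nat \<Rightarrow> int" where
  "Ich D s s' k = (\<Sum>p\<leftarrow>path D s s' k. idx D p)"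

text \<open>Substitution A_i := A_i - I_i for every component i.\<close>
definition subst_A :: "'c vdiag \<Rightarrow> (nat \<Rightarrow> nat) \<Rightarrow> (nat \<Rightarrow> nat) \<Rightarrow> lin \<Rightarrow> lin" where
  "subst_A D s s' e = (fst e, snd e - (\<Sum>i<ncomp D. fst e i * Ich D s s' i))"

definition corr :: "'c vdiag \<Rightarrow> (nat \<Rightarrow> nat) \<Rightarrow> (nat \<Rightarrow> nat) \<Rightarrow> 'c \<Rightarrow> int" where
  "corr D s s' d =
     (if in_path D s s' (d, True) then weight D (over_comp D d) else 0)
   - (if in_path D s s' (d, False) then weight D (under_comp D d) else 0)"

end

theory Submission
  imports Defs
begin

text \<open>Moving the starting point of \<open>L\<^sub>k\<close> forward over a stretch with total index change
  \<open>I\<^sub>k\<close> lowers every label on \<open>L\<^sub>k\<close> by \<open>I\<^sub>k\<close>, except that the labels on the stretch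
  itself are now reached only after a full turn, which adds the total index change around
  \<open>L\<^sub>k\<close>.  That total is the weight \<open>n\<^sub>k\<close>, because every self-crossing is passed once over
  and once under, with opposite index changes.  Since \<open>W(d)\<close> is the label of the incoming
  overstrand minus that of the outgoing understrand, the exponent of each monomial changes
  by \<open>-I\<^sub>o + I\<^sub>u\<close> (the substitution \<open>A\<^sub>i := A\<^sub>i - I\<^sub>i\<close>) plus \<open>n\<^sub>o\<close> or \<open>-n\<^sub>u\<close> for the passages
  lying on the stretch.\<close>

lemma sum_list_rotate:
  fixes xs :: "'a::comm_monoid_add list"
  shows "sum_list (rotate n xs) = sum_list xs"
  by (metis add.commute append_take_drop_id rotate_drop_take sum_list_append)

lemma sum_list_take_rotate:
  fixes xs :: "'a::ab_group_add list"
  assumes "m \<le> length xs" "i \<le> length xs"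
  shows "sum_list (take i (rotate m xs)) = sum_list (take (m + i) (xs @ xs)) - sum_list (take m xs)"
proof -
  have "rotate m xs = drop m xs @ take m xs"
    using rotate_append[of "take m xs" "drop m xs"] assms(1) by simp
  then have "take m xs @ take i (rotate m xs) = take (m + i) (xs @ xs)"
    using assms by (simp add: take_append take_add) (simp add: add.commute)
  then show ?thesis by (metis add_diff_cancel_left' sum_list_append)
qed

lemma nth_in_set_take_iff:
  assumes "distinct xs" "i < length xs"
  shows "xs ! i \<in> set (take n xs) \<longleftrightarrow> i < n"
proof
  assume "xs ! i \<in> set (take n xs)"
  then obtain i' where "i' < n" "i' < length xs" "xs ! i' = xs ! i"
    by (auto simp: in_set_conv_nth)
  then show "i < n" using assms nth_eq_iff_index_eq by metis
next
  assume "i < n"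
  then show "xs ! i \<in> set (take n xs)" using assms(2) by (simp add: in_set_conv_nth) (metis nth_take)
qed

lemma wf_diagD:
  assumes "wf_diag D"
  shows "k < ncomp D \<Longrightarrow> distinct (gauss D k)"
    and "k < ncomp D \<Longrightarrow> (d, b) \<in> set (gauss D k) \<Longrightarrow> d \<in> crossings D"
    and "d \<in> crossings D \<Longrightarrow> \<exists>!k. k < ncomp D \<and> (d, b) \<in> set (gauss D k)"
proof -
  have gauss: "\<forall>k<ncomp D. distinct (gauss D k) \<and> fst ` set (gauss D k) \<subseteq> crossings D"
    using assms unfolding wf_diag_def by (elim conjE)
  have unique: "\<forall>d\<in>crossings D. \<forall>b. \<exists>!k. k < ncomp D \<and> (d, b) \<in> set (gauss D k)"
    using assms unfolding wf_diag_def by (elim conjE)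
  show "k < ncomp D \<Longrightarrow> distinct (gauss D k)" using gauss by simp
  show "k < ncomp D \<Longrightarrow> (d, b) \<in> set (gauss D k) \<Longrightarrow> d \<in> crossings D" using gauss by force
  show "d \<in> crossings D \<Longrightarrow> \<exists>!k. k < ncomp D \<and> (d, b) \<in> set (gauss D k)" using unique by simp
qed

lemma comp_of_eqI:
  assumes wf: "wf_diag D" and k: "k < ncomp D" and p: "(d, b) \<in> set (gauss D k)"
  shows "comp_of D (d, b) = k"
  unfolding comp_of_def
  using wf_diagD(3)[OF wf wf_diagD(2)[OF wf k p], of b] k p by (blast intro: the1_equality)

lemma comp_of_passage:
  assumes wf: "wf_diag D" and d: "d \<in> crossings D"
  shows "comp_of D (d, b) < ncomp D" and "(d, b) \<in> set (gauss D (comp_of D (d, b)))"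
  using theI'[OF wf_diagD(3)[OF wf d, of b]] unfolding comp_of_def by auto

lemma self_crossing_flip_passage:
  assumes wf: "wf_diag D" and k: "k < ncomp D"
    and p: "(d, b) \<in> set (gauss D k)" and sc: "self_crossing D d"
  shows "(d, \<not> b) \<in> set (gauss D k)"
proof -
  have "comp_of D (d, \<not> b) = comp_of D (d, b)"
    using sc unfolding self_crossing_def over_comp_def under_comp_def by (cases b) auto
  also have "\<dots> = k" using comp_of_eqI[OF wf k p] .
  finally show ?thesis using comp_of_passage(2)[OF wf wf_diagD(2)[OF wf k p], of "\<not> b"] by simp
qed

lemma sum_idx_gauss_eq_weight:
  assumes wf: "wf_diag D" and k: "k < ncomp D"
  shows "sum_list (map (idx D) (gauss D k)) = weight D k"
proof -
  let ?g = "gauss D k" and ?sc = "\<lambda>p. self_crossing D (fst p)"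
  let ?S = "{d. self_crossing D d \<and> (\<exists>b. (d, b) \<in> set ?g)}"
  have "{p \<in> set ?g. ?sc p} = ?S \<times> UNIV"
  proof (intro set_eqI iffI)
    fix p :: "_ \<times> bool" assume "p \<in> ?S \<times> UNIV"
    then obtain d b b' where p: "p = (d, b')" and sc: "self_crossing D d" and db: "(d, b) \<in> set ?g"
      by auto
    have "(d, \<not> b) \<in> set ?g" using self_crossing_flip_passage[OF wf k db sc] .
    then show "p \<in> {p \<in> set ?g. ?sc p}" using p sc db by (cases b; cases b') auto
  next
    fix p :: "_ \<times> bool" assume "p \<in> {p \<in> set ?g. ?sc p}"
    then show "p \<in> ?S \<times> UNIV" by (cases p) auto
  qed
  then have "(\<Sum>p \<in> set ?g. if ?sc p then idx D p else 0) = (\<Sum>d \<in> ?S. \<Sum>b \<in> UNIV. idx D (d, b))"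
    by (simp add: sum.inter_filter[symmetric] sum.cartesian_product)
  also have "\<dots> = 0" by (simp add: UNIV_bool idx_def)
  finally have "sum_list (map (\<lambda>p. if ?sc p then idx D p else 0) ?g) = 0"
    using wf_diagD(1)[OF wf k] by (simp add: sum_list_distinct_conv_sum_set)
  moreover have "sum_list (map (idx D) ?g)
      = sum_list (map (\<lambda>p. (if ?sc p then idx D p else 0) + (if ?sc p then 0 else idx D p)) ?g)"
    by (intro arg_cong[where f = sum_list] map_cong) auto
  ultimately show ?thesis
    unfolding weight_def by (simp add: sum_list_addf)
qed

lemma pos_eqI:
  assumes wf: "wf_diag D" and k: "k < ncomp D" and p: "(d, b) \<in> set (gauss D k)"
    and j: "j < length (gauss D k)" "rot D s k ! j = (d, b)"
  shows "pos D s (d, b) = j"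
proof -
  have dist: "distinct (rot D s k)" and len: "length (rot D s k) = length (gauss D k)"
    using wf_diagD(1)[OF wf k] by (simp_all add: rot_def)
  show ?thesis unfolding pos_def comp_of_eqI[OF wf k p]
  proof (rule the_equality)
    show "j < length (rot D s k) \<and> rot D s k ! j = (d, b)" using j len by simp
    fix i assume "i < length (rot D s k) \<and> rot D s k ! i = (d, b)"
    then show "i = j" using j dist len nth_eq_iff_index_eq by metis
  qed
qed

lemma pos_in_rot:
  assumes wf: "wf_diag D" and k: "k < ncomp D" and p: "(d, b) \<in> set (gauss D k)"
  shows "pos D s (d, b) < length (gauss D k)" and "rot D s k ! pos D s (d, b) = (d, b)"
proof -
  obtain j where "j < length (gauss D k)" "rot D s k ! j = (d, b)"
    using p unfolding rot_def by (metis in_set_conv_nth length_rotate set_rotate)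
  with pos_eqI[OF wf k p]
  show "pos D s (d, b) < length (gauss D k)" and "rot D s k ! pos D s (d, b) = (d, b)"
    by simp_all
qed

lemma length_path:
  assumes "0 < length (gauss D k)"
  shows "length (path D s s' k) = nat ((int (s' k) - int (s k)) mod int (length (gauss D k)))"
    and "length (path D s s' k) < length (gauss D k)"
proof -
  have "nat ((int (s' k) - int (s k)) mod int (length (gauss D k))) < length (gauss D k)"
    using assms by (simp add: nat_less_iff)
  then show "length (path D s s' k) = nat ((int (s' k) - int (s k)) mod int (length (gauss D k)))"
    and "length (path D s s' k) < length (gauss D k)"
    by (simp_all add: path_def rot_def)
qed

lemma path_eq_take: "path D s s' k = take (length (path D s s' k)) (rot D s k)"
  unfolding path_def by (simp add: min_def)

lemma rot_change_start: "rot D s' k = rotate (length (path D s s' k)) (rot D s k)"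
proof (cases "gauss D k = []")
  case False
  define L where "L = length (gauss D k)"
  define m where "m = nat ((int (s' k) - int (s k)) mod int L)"
  have L: "0 < L" using False unfolding L_def by simp
  have "int ((m + s k) mod L) = ((int (s' k) - int (s k)) mod int L + int (s k)) mod int L"
    using L unfolding m_def by (simp add: zmod_int)
  also have "\<dots> = int (s' k mod L)" by (simp add: mod_add_left_eq zmod_int)
  finally have "(m + s k) mod L = s' k mod L" by simp
  moreover have "length (path D s s' k) = m"
    using length_path(1)[of D k s s'] L unfolding m_def L_def by simp
  ultimately show ?thesis
    unfolding rot_def rotate_rotate L_def by (metis rotate_conv_mod)
qed (simp add: rot_def)

lemma in_path_iff_pos_less:
  assumes wf: "wf_diag D" and k: "k < ncomp D" and p: "(d, b) \<in> set (gauss D k)"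
  shows "in_path D s s' (d, b) \<longleftrightarrow> pos D s (d, b) < length (path D s s' k)"
proof -
  have "distinct (rot D s k)" "pos D s (d, b) < length (rot D s k)"
    using wf_diagD(1)[OF wf k] pos_in_rot(1)[OF wf k p] by (simp_all add: rot_def)
  from nth_in_set_take_iff[OF this, of "length (path D s s' k)"] show ?thesis
    unfolding in_path_def comp_of_eqI[OF wf k p] pos_in_rot(2)[OF wf k p]
    by (subst path_eq_take) simp
qed

lemma pos_change_start:
  assumes wf: "wf_diag D" and k: "k < ncomp D" and p: "(d, b) \<in> set (gauss D k)"
  shows "length (path D s s' k) + pos D s' (d, b)
    = (if in_path D s s' (d, b) then length (gauss D k) else 0) + pos D s (d, b)"
proof -
  define L m j where "L = length (gauss D k)" and "m = length (path D s s' k)" and "j = pos D s (d, b)"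
  define j' where "j' = (if j < m then L else 0) + j - m"
  have j: "j < L" "rot D s k ! j = (d, b)" using pos_in_rot[OF wf k p] unfolding L_def j_def by auto
  have m: "m < L" using length_path(2)[of D k s s'] j(1) unfolding L_def m_def by force
  have shift: "m + j' = (if j < m then L else 0) + j" unfolding j'_def using j(1) m by auto
  have "j' < L" unfolding j'_def using j(1) m by auto
  moreover have "rot D s' k ! j' = (d, b)"
    using j shift \<open>j' < L\<close> unfolding rot_change_start[of D s' k s] m_def[symmetric]
    by (simp add: nth_rotate L_def rot_def)
  ultimately have "pos D s' (d, b) = j'" using pos_eqI[OF wf k p] unfolding L_def by blast
  then show ?thesis using shift in_path_iff_pos_less[OF wf k p] unfolding L_def m_def j_def by simp
qed

lemma label_norm_conv_sum_idx:
  "label_norm D s k j = lin_add (lin_var k) (lin_const (sum_list (take j (map (idx D) (rot D s k)))))"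
proof -
  have "(\<lambda>p. (if self_crossing D (fst p) then idx D p else 0)
      + (if self_crossing D (fst p) then 0 else idx D p)) = idx D"
    by auto
  then show ?thesis
    unfolding label_norm_def label_offsets_def by (simp add: sum_list_addf[symmetric] take_map)
qed

lemma label_norm_change_start:
  assumes wf: "wf_diag D" and k: "k < ncomp D" and p: "(d, b) \<in> set (gauss D k)" and e: "e \<le> 1"
  \<comment> \<open>\<open>e = 0\<close> and \<open>e = 1\<close>: the labels just before and just after the passage\<close>
  shows "label_norm D s' k (pos D s' (d, b) + e) =
    lin_add (label_norm D s k (pos D s (d, b) + e))
      (lin_const ((if in_path D s s' (d, b) then weight D k else 0) - Ich D s s' k))"
proof -
  define L m j j' where "L = length (gauss D k)" and "m = length (path D s s' k)"
    and "j = pos D s (d, b)" and "j' = pos D s' (d, b)"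
  define xs where "xs = map (idx D) (rot D s k)"
  have shift: "m + j' = (if in_path D s s' (d, b) then L else 0) + j"
    using pos_change_start[OF wf k p] unfolding L_def m_def j_def j'_def .
  have in_path: "in_path D s s' (d, b) \<longleftrightarrow> j < m"
    using in_path_iff_pos_less[OF wf k p] unfolding j_def m_def .
  have "j < L" "j' < L" using pos_in_rot(1)[OF wf k p] unfolding L_def j_def j'_def by auto
  then have "j' + e \<le> L" "j + e \<le> L" using shift in_path e by (auto split: if_splits)
  moreover have "m \<le> L" unfolding m_def L_def path_def rot_def by simp
  moreover have len: "length (rot D s k) = L" unfolding L_def rot_def by simp
  ultimately have "sum_list (take (j' + e) (map (idx D) (rot D s' k)))
      = sum_list (take (m + (j' + e)) (xs @ xs)) - sum_list (take m xs)"
    using sum_list_take_rotate[of m xs "j' + e"]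
    unfolding rot_change_start[of D s' k s] rotate_map xs_def L_def m_def by simp
  also have "m + (j' + e) = (if in_path D s s' (d, b) then L else 0) + (j + e)"
    using shift by simp
  also have "sum_list (take \<dots> (xs @ xs))
      = (if in_path D s s' (d, b) then sum_list xs else 0) + sum_list (take (j + e) xs)"
    using \<open>j + e \<le> L\<close> len unfolding xs_def by (simp add: take_append)
  finally have prefix: "sum_list (take (j' + e) (map (idx D) (rot D s' k)))
      = (if in_path D s s' (d, b) then sum_list xs else 0) + sum_list (take (j + e) xs)
        - sum_list (take m xs)" .
  have "sum_list xs = weight D k"
    using sum_idx_gauss_eq_weight[OF wf k] unfolding xs_def rot_def
    by (metis rotate_map sum_list_rotate)
  moreover have "Ich D s s' k = sum_list (take m xs)"
    unfolding Ich_def m_def xs_def by (subst path_eq_take) (simp add: take_map)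
  ultimately show ?thesis
    using prefix unfolding label_norm_conv_sum_idx j_def j'_def xs_def
    by (simp add: lin_add_def lin_const_def)
qed

lemma subst_A_lin_diff:
  "subst_A D s s' (lin_diff x y) = lin_diff (subst_A D s s' x) (subst_A D s s' y)"
  by (simp add: subst_A_def lin_diff_def left_diff_distrib sum_subtractf)

lemma subst_A_label_norm:
  assumes "k < ncomp D"
  shows "subst_A D s s' (label_norm D s0 k j) = lin_add (label_norm D s0 k j) (lin_const (- Ich D s s' k))"
proof -
  have "(\<Sum>i<ncomp D. (if i = k then 1 else 0) * Ich D s s' i) = Ich D s s' k"
    using assms by (simp add: sum.delta if_distrib[of "\<lambda>x. x * _"] cong: if_cong)
  then show ?thesis
    by (simp add: subst_A_def label_norm_def lin_var_def lin_add_def lin_const_def)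
qed

lemma Wt_change_start:
  assumes wf: "wf_diag D" and d: "d \<in> crossings D"
  shows "Wt D s' d = lin_add (subst_A D s s' (Wt D s d)) (lin_const (corr D s s' d))"
proof -
  let ?o = "over_comp D d" and ?u = "under_comp D d"
  have o: "?o < ncomp D" "(d, True) \<in> set (gauss D ?o)"
    and u: "?u < ncomp D" "(d, False) \<in> set (gauss D ?u)"
    using comp_of_passage[OF wf d] unfolding over_comp_def under_comp_def by auto
  show ?thesis
    using label_norm_change_start[OF wf o, of 0 s' s] label_norm_change_start[OF wf u, of 1 s' s]
    unfolding Wt_def corr_def subst_A_lin_diff subst_A_label_norm[OF o(1)] subst_A_label_norm[OF u(1)]
    by (simp add: lin_add_def lin_diff_def lin_const_def)
qed

lemma poly_of_cong:
  assumes "\<And>d. d \<in> crossings D \<Longrightarrow> E d = E' d"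
  shows "poly_of D E = poly_of D E'"
  unfolding poly_of_def using assms by (intro ext) (simp cong: sum.cong)

theorem proposition8:
  fixes D :: "'c vdiag" and s s' :: "nat \<Rightarrow> nat"
  assumes "wf_diag D"
  shows "aip D s' =
    poly_of D (\<lambda>d. lin_add (subst_A D s s' (Wt D s d)) (lin_const (corr D s s' d)))"
  unfolding aip_def using Wt_change_start[OF assms] by (rule poly_of_cong)

end
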